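(* Let $R$ be the right shift on $\ell^2_{\mathbb{H}}(\mathbb{Z})$ defined by $R(x)=y$ with $y_i=x_{i+1}$ for $i\neq-1$ and $y_{-1}=0$. Then $\partial\sigma_S(R)$ is properly contained in $B_{S,\partial}(R)$.
   Context: $\mathbb{H}$ denotes the quaternions, $Re(q)$ the real part and $|q|$ the norm. $\ell^2_{\mathbb{H}}(\mathbb{Z})=\{x:\mathbb{Z}\to\mathbb{H}:\sum_i|x_i|^2<\infty\}$ is a right quaternionic Hilbert space with $xa=(x_ia)_i$ and $\langle x,y\rangle=\sum_i\overline{x_i}y_i$, equipped with the left multiplication induced by the standard Hilbert basis, i.e. $qx=(qx_i)_i$. $\mathcal{B}=\mathcal{B}(\ell^2_{\mathbb{H}}(\mathbb{Z}))$ (bounded right linear operators with $(qT)x=q(Tx)$, $(Tq)x=T(qx)$, composition, operator norm) is a quaternionic two-sided Banach algebra with unit $\mathbb{I}$, with invertible group $\mathcal{B}^{-1}$. For $T\in\mathcal{B}$, $R_q(T)=T^2-2Re(q)T+|q|^2\mathbb{I}$; $\sigma_S(T)=\{q\in\mathbb{H}:R_q(T)\notin\mathcal{B}^{-1}\}$ with boundary $\partial\sigma_S(T)$ in $\mathbb{H}$; the boundary S-spectrum is $B_{S,\partial}(T)=\{q\in\mathbb{H}:R_q(T)\in\partial(\mathcal{B}\setminus\mathcal{B}^{-1})\}$, where $\partial$ is the topological boundary in $\mathcal{B}$ for the operator norm. *)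

theory Defs
  imports "HOL-Analysis.Analysis"
begin

section \<open>Quaternions, modelled as real^4 (components 1,2,3,4 = real part, i, j, k)\<close>

type_synonym quat = "real ^ 4"

text \<open>The Euclidean norm on real^4 is the quaternionic norm |q|, and the topology
of real^4 is the standard topology of the quaternions.\<close>

definition qRe :: "quat \<Rightarrow> real" where
  "qRe q = q $ 1"

definition qmult :: "quat \<Rightarrow> quat \<Rightarrow> quat" where
  "qmult p q = (\<chi> n. if n = 1 then p$1*q$1 - p$2*q$2 - p$3*q$3 - p$4*q$4
                  else if n = 2 then p$1*q$2 + p$2*q$1 + p$3*q$4 - p$4*q$3
                  else if n = 3 then p$1*q$3 - p$2*q$4 + p$3*q$1 + p$4*q$2
                  else p$1*q$4 + p$2*q$3 - p$3*q$2 + p$4*q$1)"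

definition l2H :: "(int \<Rightarrow> quat) set" where
  "l2H = {x. (\<lambda>i. (norm (x i))\<^sup>2) summable_on UNIV}"

definition l2norm :: "(int \<Rightarrow> quat) \<Rightarrow> real" where
  "l2norm x = sqrt (infsum (\<lambda>i. (norm (x i))\<^sup>2) UNIV)"

definition rscal :: "(int \<Rightarrow> quat) \<Rightarrow> quat \<Rightarrow> (int \<Rightarrow> quat)" where
  "rscal x a = (\<lambda>i. qmult (x i) a)"

text \<open>Operators are represented as functions on int => quat which vanish outside l2H
(so that an operator is determined by its action on l2H).\<close>

definition Bops :: "((int \<Rightarrow> quat) \<Rightarrow> (int \<Rightarrow> quat)) set" where
  "Bops = {T. (\<forall>x\<in>l2H. T x \<in> l2H)
            \<and> (\<forall>x\<in>l2H. \<forall>y\<in>l2H. T (\<lambda>i. x i + y i) = (\<lambda>i. T x i + T y i))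
            \<and> (\<forall>x\<in>l2H. \<forall>a. T (rscal x a) = rscal (T x) a)
            \<and> (\<exists>C. \<forall>x\<in>l2H. l2norm (T x) \<le> C * l2norm x)
            \<and> (\<forall>x. x \<notin> l2H \<longrightarrow> T x = (\<lambda>i. 0))}"

definition Iop :: "(int \<Rightarrow> quat) \<Rightarrow> (int \<Rightarrow> quat)" where
  "Iop x = (if x \<in> l2H then x else (\<lambda>i. 0))"

definition opnorm :: "((int \<Rightarrow> quat) \<Rightarrow> (int \<Rightarrow> quat)) \<Rightarrow> real" where
  "opnorm T = Sup {l2norm (T x) | x. x \<in> l2H \<and> l2norm x \<le> 1}"

definition opdist :: "((int \<Rightarrow> quat) \<Rightarrow> (int \<Rightarrow> quat)) \<Rightarrow> ((int \<Rightarrow> quat) \<Rightarrow> (int \<Rightarrow> quat)) \<Rightarrow> real" where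
  "opdist S T = opnorm (\<lambda>x i. S x i - T x i)"

definition Binv :: "((int \<Rightarrow> quat) \<Rightarrow> (int \<Rightarrow> quat)) set" where
  "Binv = {T \<in> Bops. \<exists>S\<in>Bops. S \<circ> T = Iop \<and> T \<circ> S = Iop}"

definition Bfrontier :: "((int \<Rightarrow> quat) \<Rightarrow> (int \<Rightarrow> quat)) set \<Rightarrow> ((int \<Rightarrow> quat) \<Rightarrow> (int \<Rightarrow> quat)) set" where
  "Bfrontier A = {T \<in> Bops. \<forall>e>0. (\<exists>S\<in>Bops \<inter> A. opdist S T < e) \<and> (\<exists>S\<in>Bops - A. opdist S T < e)}"

definition Rq :: "quat \<Rightarrow> ((int \<Rightarrow> quat) \<Rightarrow> (int \<Rightarrow> quat)) \<Rightarrow> ((int \<Rightarrow> quat) \<Rightarrow> (int \<Rightarrow> quat))" where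
  "Rq q T = (\<lambda>x. if x \<in> l2H then (\<lambda>i. T (T x) i - (2 * qRe q) *\<^sub>R T x i + (norm q)\<^sup>2 *\<^sub>R x i)
                 else (\<lambda>i. 0))"

definition S_spectrum :: "((int \<Rightarrow> quat) \<Rightarrow> (int \<Rightarrow> quat)) \<Rightarrow> quat set" where
  "S_spectrum T = {q. Rq q T \<notin> Binv}"

definition boundary_S_spectrum :: "((int \<Rightarrow> quat) \<Rightarrow> (int \<Rightarrow> quat)) \<Rightarrow> quat set" where
  "boundary_S_spectrum T = {q. Rq q T \<in> Bfrontier (Bops - Binv)}"

definition Rshift :: "(int \<Rightarrow> quat) \<Rightarrow> (int \<Rightarrow> quat)" where
  "Rshift x = (if x \<in> l2H then (\<lambda>i. if i = -1 then 0 else x (i + 1)) else (\<lambda>i. 0))"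

end

theory Submission
  imports Defs
begin

text \<open>The map \<open>q \<mapsto> R\<^sub>q(T)\<close> is continuous for the operator norm. A point of the boundary of
  \<open>\<sigma>\<^sub>S(T)\<close> is a limit both of S-spectral points and of S-resolvent points, whose operators
  \<open>R\<^sub>q(T)\<close> are non-invertible and invertible respectively; hence
  \<open>\<partial>\<sigma>\<^sub>S(T) \<subseteq> B\<^sub>S\<^sub>,\<^sub>\<partial>(T)\<close> for every bounded \<open>T\<close>.

  For the shift \<open>R\<close>, each \<open>|q| < 1\<close> lies in \<open>\<sigma>\<^sub>S(R)\<close>: since \<open>q\<close> is a root of
  \<open>X\<^sup>2 - 2 Re(q) X + |q|\<^sup>2\<close>, the sequence \<open>(q\<^sup>i)\<^sub>i\<^sub>\<ge>\<^sub>0\<close> (zero for \<open>i < 0\<close>) is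
  an \<open>\<ell>\<^sup>2\<close> kernel vector of \<open>R\<^sub>q(R)\<close>. So \<open>0\<close> is an interior point of \<open>\<sigma>\<^sub>S(R)\<close>.
  But \<open>R\<^sub>0(R) = R\<^sup>2\<close> is the weighted shift \<open>x \<mapsto> (c\<^sub>i x\<^sub>i\<^sub>+\<^sub>2)\<^sub>i\<close> whose weights vanish
  only at \<open>i = -1, -2\<close>; setting these two weights to \<open>\<epsilon>\<close> gives invertible operators at
  distance \<open>\<epsilon>\<close> from \<open>R\<^sup>2\<close>, so \<open>0 \<in> B\<^sub>S\<^sub>,\<^sub>\<partial>(R)\<close>.\<close>

lemma norm_quat_sq: "(norm (q::quat))\<^sup>2 = (q$1)\<^sup>2 + (q$2)\<^sup>2 + (q$3)\<^sup>2 + (q$4)\<^sup>2"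
  unfolding norm_vec_def L2_set_def by (simp add: sum_4 sum_nonneg)

lemma qmult_nth:
  "qmult p q $ 1 = p$1*q$1 - p$2*q$2 - p$3*q$3 - p$4*q$4"
  "qmult p q $ 2 = p$1*q$2 + p$2*q$1 + p$3*q$4 - p$4*q$3"
  "qmult p q $ 3 = p$1*q$3 - p$2*q$4 + p$3*q$1 + p$4*q$2"
  "qmult p q $ 4 = p$1*q$4 + p$2*q$3 - p$3*q$2 + p$4*q$1"
  by (simp_all add: qmult_def)

lemma quat_eqI:
  assumes "(p::quat)$1 = q$1" "p$2 = q$2" "p$3 = q$3" "p$4 = q$4"
  shows "p = q"
proof (subst vec_eq_iff, intro allI)
  fix i :: 4
  show "p $ i = q $ i"
    using exhaust_4[of i] assms by auto
qed

lemma qmult_add_left: "qmult (p + q) a = qmult p a + qmult q a"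
  by (rule quat_eqI) (simp_all add: qmult_nth algebra_simps)

lemma qmult_diff_left: "qmult (p - q) a = qmult p a - qmult q a"
  by (rule quat_eqI) (simp_all add: qmult_nth algebra_simps)

lemma qmult_scaleR_left: "qmult (c *\<^sub>R p) a = c *\<^sub>R qmult p a"
  by (rule quat_eqI) (simp_all add: qmult_nth algebra_simps)

lemma norm_qmult: "norm (qmult p q) = norm p * norm q"
proof -
  have "(norm (qmult p q))\<^sup>2 = (norm p * norm q)\<^sup>2"
    unfolding power_mult_distrib norm_quat_sq qmult_nth by algebra
  then show ?thesis
    by (simp add: power2_eq_iff_nonneg)
qed

lemma qmult_characteristic:
  "qmult q (qmult q y) - (2 * qRe q) *\<^sub>R qmult q y + (norm q)\<^sup>2 *\<^sub>R y = 0"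
  unfolding norm_quat_sq
  by (rule quat_eqI) (simp_all add: qmult_nth qRe_def, algebra+)

lemma norm_qmult_power: "norm ((qmult q ^^ n) p) = norm q ^ n * norm p"
  by (induction n) (simp_all add: norm_qmult)

lemma norm_add_sq_le:
  fixes a b :: "'a::real_normed_vector"
  shows "(norm (a + b))\<^sup>2 \<le> 2 * (norm a)\<^sup>2 + 2 * (norm b)\<^sup>2"
proof -
  have "(norm (a + b))\<^sup>2 \<le> (norm a + norm b)\<^sup>2"
    by (simp add: norm_triangle_ineq power_mono)
  also have "\<dots> = 2 * (norm a)\<^sup>2 + 2 * (norm b)\<^sup>2 - (norm a - norm b)\<^sup>2"
    by (simp add: power2_eq_square algebra_simps)
  finally show ?thesis
    using zero_le_power2[of "norm a - norm b"] by linarith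
qed

definition l2sq :: "(int \<Rightarrow> quat) \<Rightarrow> real" where
  "l2sq x = infsum (\<lambda>i. (norm (x i))\<^sup>2) UNIV"

lemma l2norm_eq_sqrt_l2sq: "l2norm x = sqrt (l2sq x)"
  by (simp add: l2norm_def l2sq_def)

lemma l2sq_nonneg: "0 \<le> l2sq x"
  unfolding l2sq_def by (rule infsum_nonneg) simp

lemma zero_in_l2H: "(\<lambda>i. 0) \<in> l2H"
  by (simp add: l2H_def)

lemma l2sq_zero [simp]: "l2sq (\<lambda>i. 0) = 0"
  by (simp add: l2sq_def)

lemma l2norm_le_sqrt_mult:
  assumes "0 \<le> K" and "l2sq y \<le> K * l2sq x"
  shows "l2norm y \<le> sqrt K * l2norm x"
  using assms by (simp add: l2norm_eq_sqrt_l2sq flip: real_sqrt_mult)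

lemma l2H_dominated:
  assumes f: "f summable_on UNIV" and le: "\<And>i. (norm (y i))\<^sup>2 \<le> f i"
  shows "y \<in> l2H" and "l2sq y \<le> infsum f UNIV"
proof -
  have y: "(\<lambda>i. (norm (y i))\<^sup>2) summable_on UNIV"
    by (rule summable_on_comparison_test[OF f]) (use le in auto)
  then show "y \<in> l2H"
    by (simp add: l2H_def)
  show "l2sq y \<le> infsum f UNIV"
    unfolding l2sq_def using y f le by (rule infsum_mono)
qed

lemma
  assumes u: "u \<in> l2H" and v: "v \<in> l2H"
  shows l2H_lincomb: "(\<lambda>i. a *\<^sub>R u i + b *\<^sub>R v i) \<in> l2H"
    and l2sq_lincomb_le: "l2sq (\<lambda>i. a *\<^sub>R u i + b *\<^sub>R v i) \<le> 2 * a\<^sup>2 * l2sq u + 2 * b\<^sup>2 * l2sq v"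
proof -
  let ?f = "\<lambda>i. 2 * a\<^sup>2 * (norm (u i))\<^sup>2 + 2 * b\<^sup>2 * (norm (v i))\<^sup>2"
  have su: "(\<lambda>i. 2 * a\<^sup>2 * (norm (u i))\<^sup>2) summable_on UNIV"
    using u by (simp add: l2H_def summable_on_cmult_right)
  have sv: "(\<lambda>i. 2 * b\<^sup>2 * (norm (v i))\<^sup>2) summable_on UNIV"
    using v by (simp add: l2H_def summable_on_cmult_right)
  have f: "?f summable_on UNIV"
    using su sv by (rule summable_on_add)
  have le: "(norm (a *\<^sub>R u i + b *\<^sub>R v i))\<^sup>2 \<le> ?f i" for i
    using norm_add_sq_le[of "a *\<^sub>R u i" "b *\<^sub>R v i"] by (simp add: power_mult_distrib)
  show "(\<lambda>i. a *\<^sub>R u i + b *\<^sub>R v i) \<in> l2H"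
    using f le by (rule l2H_dominated)
  have "infsum ?f UNIV = 2 * a\<^sup>2 * l2sq u + 2 * b\<^sup>2 * l2sq v"
    using u v by (simp add: infsum_add[OF su sv] infsum_cmult_right l2H_def l2sq_def)
  then show "l2sq (\<lambda>i. a *\<^sub>R u i + b *\<^sub>R v i) \<le> 2 * a\<^sup>2 * l2sq u + 2 * b\<^sup>2 * l2sq v"
    using l2H_dominated(2)[OF f le] by simp
qed

lemma l2H_add: "x \<in> l2H \<Longrightarrow> y \<in> l2H \<Longrightarrow> (\<lambda>i. x i + y i) \<in> l2H"
  using l2H_lincomb[of x y 1 1] by simp

lemma l2H_rscal:
  assumes "x \<in> l2H"
  shows "rscal x a \<in> l2H"
proof (rule l2H_dominated)
  show "(\<lambda>i. (norm a)\<^sup>2 * (norm (x i))\<^sup>2) summable_on UNIV"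
    using assms by (simp add: l2H_def summable_on_cmult_right)
qed (simp add: rscal_def norm_qmult power_mult_distrib)

lemma
  assumes "inj \<sigma>" and x: "x \<in> l2H"
  shows l2H_reindex: "(\<lambda>i. x (\<sigma> i)) \<in> l2H"
    and l2sq_reindex_le: "l2sq (\<lambda>i. x (\<sigma> i)) \<le> l2sq x"
proof -
  let ?g = "\<lambda>i. (norm (x i))\<^sup>2"
  have g: "?g summable_on UNIV"
    using x by (simp add: l2H_def)
  have g_range: "?g summable_on range \<sigma>"
    using g by (rule summable_on_subset_banach) simp
  then have "(?g \<circ> \<sigma>) summable_on UNIV"
    using summable_on_reindex[of \<sigma> UNIV ?g] \<open>inj \<sigma>\<close> by simp
  then show "(\<lambda>i. x (\<sigma> i)) \<in> l2H"
    by (simp add: l2H_def o_def)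
  have "l2sq (\<lambda>i. x (\<sigma> i)) = infsum ?g (range \<sigma>)"
    using infsum_reindex[of \<sigma> UNIV ?g] \<open>inj \<sigma>\<close> by (simp add: l2sq_def o_def)
  also have "\<dots> \<le> l2sq x"
    unfolding l2sq_def by (rule infsum_mono_neutral[OF g_range g]) auto
  finally show "l2sq (\<lambda>i. x (\<sigma> i)) \<le> l2sq x" .
qed

lemma opnorm_le_sqrt:
  assumes "0 \<le> K" and bound: "\<And>x. x \<in> l2H \<Longrightarrow> l2sq (D x) \<le> K * l2sq x"
  shows "opnorm D \<le> sqrt K"
  unfolding opnorm_def
proof (rule cSup_least)
  have "l2norm (\<lambda>i. 0) \<le> 1"
    by (simp add: l2norm_eq_sqrt_l2sq)
  then show "{l2norm (D x) |x. x \<in> l2H \<and> l2norm x \<le> 1} \<noteq> {}"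
    using zero_in_l2H by blast
next
  fix r assume "r \<in> {l2norm (D x) |x. x \<in> l2H \<and> l2norm x \<le> 1}"
  then obtain x where x: "x \<in> l2H" "l2norm x \<le> 1" and r: "r = l2norm (D x)"
    by blast
  have "r \<le> sqrt K * l2norm x"
    unfolding r using \<open>0 \<le> K\<close> bound[OF x(1)] by (rule l2norm_le_sqrt_mult)
  also have "\<dots> \<le> sqrt K"
    using x(2) \<open>0 \<le> K\<close> by (simp add: mult_left_le)
  finally show "r \<le> sqrt K" .
qed

lemma opdist_self: "opdist T T = 0"
proof -
  have "l2norm (\<lambda>i. 0) \<le> 1"
    by (simp add: l2norm_eq_sqrt_l2sq)
  then have "{l2norm (\<lambda>i. T x i - T x i) |x. x \<in> l2H \<and> l2norm x \<le> 1} = {0}"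
    using zero_in_l2H by (auto simp: l2norm_eq_sqrt_l2sq)
  then show ?thesis
    by (simp add: opdist_def opnorm_def)
qed

lemma BopsI:
  assumes "\<And>x. x \<in> l2H \<Longrightarrow> T x \<in> l2H"
    and "\<And>x y. x \<in> l2H \<Longrightarrow> y \<in> l2H \<Longrightarrow> T (\<lambda>i. x i + y i) = (\<lambda>i. T x i + T y i)"
    and "\<And>x a. x \<in> l2H \<Longrightarrow> T (rscal x a) = rscal (T x) a"
    and "0 \<le> K" and "\<And>x. x \<in> l2H \<Longrightarrow> l2sq (T x) \<le> K * l2sq x"
    and "\<And>x. x \<notin> l2H \<Longrightarrow> T x = (\<lambda>i. 0)"
  shows "T \<in> Bops"
proof -
  have "\<forall>x\<in>l2H. l2norm (T x) \<le> sqrt K * l2norm x"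
    using assms(4,5) by (blast intro: l2norm_le_sqrt_mult)
  then show ?thesis
    unfolding Bops_def using assms(1-3,6) by blast
qed

context
  fixes T assumes T: "T \<in> Bops"
begin

lemma Bops_l2H: "x \<in> l2H \<Longrightarrow> T x \<in> l2H"
  using T by (simp add: Bops_def)

lemma Bops_add: "x \<in> l2H \<Longrightarrow> y \<in> l2H \<Longrightarrow> T (\<lambda>i. x i + y i) = (\<lambda>i. T x i + T y i)"
  using T by (simp add: Bops_def)

lemma Bops_rscal: "x \<in> l2H \<Longrightarrow> T (rscal x a) = rscal (T x) a"
  using T by (simp add: Bops_def)

lemma Bops_outside: "x \<notin> l2H \<Longrightarrow> T x = (\<lambda>i. 0)"
  using T by (simp add: Bops_def)

lemma Bops_zero: "T (\<lambda>i. 0) = (\<lambda>i. 0)"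
proof
  fix i
  have "T (\<lambda>i. 0) = (\<lambda>i. T (\<lambda>i. 0) i + T (\<lambda>i. 0) i)"
    using Bops_add[OF zero_in_l2H zero_in_l2H] by simp
  then show "T (\<lambda>i. 0) i = 0"
    by (metis add_cancel_right_right)
qed

lemma Bops_l2sq_bound: "\<exists>K\<ge>0. \<forall>x\<in>l2H. l2sq (T x) \<le> K * l2sq x"
proof -
  from T obtain C where C: "\<forall>x\<in>l2H. l2norm (T x) \<le> C * l2norm x"
    unfolding Bops_def by blast
  have "l2sq (T x) \<le> C\<^sup>2 * l2sq x" if "x \<in> l2H" for x
  proof -
    have "0 \<le> l2norm x" "0 \<le> l2norm (T x)"
      by (simp_all add: l2norm_eq_sqrt_l2sq l2sq_nonneg)
    then have "l2norm (T x) \<le> \<bar>C\<bar> * l2norm x"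
      using C that by (meson abs_ge_self mult_right_mono order_trans)
    then have "(l2norm (T x))\<^sup>2 \<le> (\<bar>C\<bar> * l2norm x)\<^sup>2"
      using \<open>0 \<le> l2norm (T x)\<close> by (rule power_mono)
    then show ?thesis
      by (simp add: l2norm_eq_sqrt_l2sq l2sq_nonneg power_mult_distrib)
  qed
  then show ?thesis
    by (blast intro: zero_le_power2)
qed

end

lemma Binv_Bops: "Binv \<subseteq> Bops"
  by (auto simp: Binv_def)

lemma not_Binv_if_kernel:
  assumes x: "x \<in> l2H" "x \<noteq> (\<lambda>i. 0)" and Tx: "T x = (\<lambda>i. 0)"
  shows "T \<notin> Binv"
proof
  assume "T \<in> Binv"
  then obtain S where T: "T \<in> Bops" and S: "S \<circ> T = Iop"
    by (auto simp: Binv_def)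
  have "x = S (T x)"
    using S x(1) by (metis Iop_def comp_apply)
  also have "\<dots> = S (T (\<lambda>i. 0))"
    by (simp add: Tx Bops_zero[OF T])
  also have "\<dots> = (\<lambda>i. 0)"
    using S zero_in_l2H by (metis Iop_def comp_apply)
  finally show False
    using x(2) by contradiction
qed

lemma mem_Bfrontier_noninvertible_iff:
  "T \<in> Bfrontier (Bops - Binv) \<longleftrightarrow>
     T \<in> Bops \<and> (\<forall>e>0. (\<exists>S\<in>Bops - Binv. opdist S T < e) \<and> (\<exists>S\<in>Binv. opdist S T < e))"
  using Binv_Bops by (auto simp: Bfrontier_def Int_absorb1 double_diff)

definition weighted_comp_op :: "(int \<Rightarrow> int) \<Rightarrow> (int \<Rightarrow> real) \<Rightarrow> (int \<Rightarrow> quat) \<Rightarrow> (int \<Rightarrow> quat)" where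
  "weighted_comp_op \<sigma> c = (\<lambda>x. if x \<in> l2H then (\<lambda>i. c i *\<^sub>R x (\<sigma> i)) else (\<lambda>i. 0))"

lemma weighted_comp_op_apply: "x \<in> l2H \<Longrightarrow> weighted_comp_op \<sigma> c x = (\<lambda>i. c i *\<^sub>R x (\<sigma> i))"
  by (simp add: weighted_comp_op_def)

lemma
  assumes "inj \<sigma>" and M: "\<And>i. \<bar>c i\<bar> \<le> M" and x: "x \<in> l2H"
  shows weighted_comp_op_l2H: "weighted_comp_op \<sigma> c x \<in> l2H"
    and l2sq_weighted_comp_op_le: "l2sq (weighted_comp_op \<sigma> c x) \<le> M\<^sup>2 * l2sq x"
proof -
  let ?g = "\<lambda>i. M\<^sup>2 * (norm (x (\<sigma> i)))\<^sup>2"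
  have g: "?g summable_on UNIV"
    using l2H_reindex[OF \<open>inj \<sigma>\<close> x] by (simp add: l2H_def summable_on_cmult_right)
  have le: "(norm (c i *\<^sub>R x (\<sigma> i)))\<^sup>2 \<le> ?g i" for i
  proof -
    have "(c i)\<^sup>2 \<le> M\<^sup>2"
      using M[of i] by (metis abs_ge_zero power2_abs power_mono)
    then show ?thesis
      by (simp add: power_mult_distrib mult_right_mono)
  qed
  show "weighted_comp_op \<sigma> c x \<in> l2H"
    unfolding weighted_comp_op_apply[OF x] using g le by (rule l2H_dominated)
  have "infsum ?g UNIV \<le> M\<^sup>2 * l2sq x"
    using l2sq_reindex_le[OF \<open>inj \<sigma>\<close> x] l2H_reindex[OF \<open>inj \<sigma>\<close> x]
    by (simp add: infsum_cmult_right l2H_def l2sq_def mult_left_mono)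
  then show "l2sq (weighted_comp_op \<sigma> c x) \<le> M\<^sup>2 * l2sq x"
    unfolding weighted_comp_op_apply[OF x] using l2H_dominated(2)[OF g le] by linarith
qed

lemma weighted_comp_op_Bops:
  assumes "inj \<sigma>" and "\<And>i. \<bar>c i\<bar> \<le> M"
  shows "weighted_comp_op \<sigma> c \<in> Bops"
proof (rule BopsI[where K = "M\<^sup>2"])
  show "weighted_comp_op \<sigma> c (\<lambda>i. x i + y i) = (\<lambda>i. weighted_comp_op \<sigma> c x i + weighted_comp_op \<sigma> c y i)"
    if "x \<in> l2H" "y \<in> l2H" for x y
    using that l2H_add[OF that] by (simp add: weighted_comp_op_apply scaleR_add_right)
  show "weighted_comp_op \<sigma> c (rscal x a) = rscal (weighted_comp_op \<sigma> c x) a" if "x \<in> l2H" for x a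
    using that l2H_rscal[OF that] by (simp add: weighted_comp_op_apply rscal_def qmult_scaleR_left)
  show "x \<in> l2H \<Longrightarrow> weighted_comp_op \<sigma> c x \<in> l2H" for x
    by (rule weighted_comp_op_l2H[OF assms])
  show "x \<in> l2H \<Longrightarrow> l2sq (weighted_comp_op \<sigma> c x) \<le> M\<^sup>2 * l2sq x" for x
    by (rule l2sq_weighted_comp_op_le[OF assms])
qed (simp_all add: weighted_comp_op_def)

lemma opnorm_weighted_comp_op_le:
  assumes "inj \<sigma>" and "\<And>i. \<bar>c i\<bar> \<le> M" and "0 \<le> M"
  shows "opnorm (weighted_comp_op \<sigma> c) \<le> M"
  using opnorm_le_sqrt[of "M\<^sup>2"] l2sq_weighted_comp_op_le[OF assms(1,2)] \<open>0 \<le> M\<close> by simp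

lemma weighted_comp_op_diff:
  "(\<lambda>x i. weighted_comp_op \<sigma> c x i - weighted_comp_op \<sigma> d x i) = weighted_comp_op \<sigma> (\<lambda>i. c i - d i)"
  by (simp add: weighted_comp_op_def fun_eq_iff scaleR_diff_left)

lemma weighted_comp_op_comp:
  assumes "inj \<tau>" and "\<And>i. \<bar>d i\<bar> \<le> M"
  shows "weighted_comp_op \<sigma> c \<circ> weighted_comp_op \<tau> d = weighted_comp_op (\<tau> \<circ> \<sigma>) (\<lambda>i. c i * d (\<sigma> i))"
proof
  fix x
  show "(weighted_comp_op \<sigma> c \<circ> weighted_comp_op \<tau> d) x = weighted_comp_op (\<tau> \<circ> \<sigma>) (\<lambda>i. c i * d (\<sigma> i)) x"
  proof (cases "x \<in> l2H")
    case True
    then show ?thesis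
      using weighted_comp_op_l2H[OF assms True] by (simp add: weighted_comp_op_apply)
  next
    case False
    then show ?thesis
      using zero_in_l2H by (simp add: weighted_comp_op_def)
  qed
qed

lemma weighted_comp_op_id: "weighted_comp_op id (\<lambda>i. 1) = Iop"
  by (simp add: weighted_comp_op_def Iop_def fun_eq_iff)

lemma weighted_comp_op_Binv:
  assumes "bij \<sigma>" and "0 < m" and c: "\<And>i. m \<le> \<bar>c i\<bar>" "\<And>i. \<bar>c i\<bar> \<le> M"
  shows "weighted_comp_op \<sigma> c \<in> Binv"
proof -
  define d where "d j = 1 / c (inv \<sigma> j)" for j
  have "inj \<sigma>"
    using \<open>bij \<sigma>\<close> by (rule bij_is_inj)
  have "inj (inv \<sigma>)"
    using \<open>bij \<sigma>\<close> by (intro bij_is_inj bij_imp_bij_inv)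
  have "\<sigma> \<circ> inv \<sigma> = id"
    using \<open>bij \<sigma>\<close> by (simp add: bij_is_surj flip: surj_iff)
  have d: "\<bar>d j\<bar> \<le> 1 / m" for j
    using c(1)[of "inv \<sigma> j"] \<open>0 < m\<close> by (simp add: d_def frac_le)
  have c_nz: "c i \<noteq> 0" for i
    using c(1)[of i] \<open>0 < m\<close> by auto
  have "weighted_comp_op \<sigma> c \<circ> weighted_comp_op (inv \<sigma>) d = weighted_comp_op (inv \<sigma> \<circ> \<sigma>) (\<lambda>i. c i * d (\<sigma> i))"
    using \<open>inj (inv \<sigma>)\<close> d by (rule weighted_comp_op_comp)
  also have "\<dots> = Iop"
    using \<open>inj \<sigma>\<close> c_nz by (simp add: d_def flip: weighted_comp_op_id)
  finally have right_inverse: "weighted_comp_op \<sigma> c \<circ> weighted_comp_op (inv \<sigma>) d = Iop" .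
  have "weighted_comp_op (inv \<sigma>) d \<circ> weighted_comp_op \<sigma> c = weighted_comp_op (\<sigma> \<circ> inv \<sigma>) (\<lambda>j. d j * c (inv \<sigma> j))"
    using \<open>inj \<sigma>\<close> c(2) by (rule weighted_comp_op_comp)
  also have "\<dots> = Iop"
    using \<open>\<sigma> \<circ> inv \<sigma> = id\<close> c_nz by (simp add: d_def flip: weighted_comp_op_id)
  finally have left_inverse: "weighted_comp_op (inv \<sigma>) d \<circ> weighted_comp_op \<sigma> c = Iop" .
  have "weighted_comp_op \<sigma> c \<in> Bops"
    using \<open>inj \<sigma>\<close> c(2) by (rule weighted_comp_op_Bops)
  moreover have "weighted_comp_op (inv \<sigma>) d \<in> Bops"
    using \<open>inj (inv \<sigma>)\<close> d by (rule weighted_comp_op_Bops)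
  ultimately show ?thesis
    using left_inverse right_inverse unfolding Binv_def by blast
qed

lemma Rq_apply: "x \<in> l2H \<Longrightarrow> Rq q T x = (\<lambda>i. T (T x) i - (2 * qRe q) *\<^sub>R T x i + (norm q)\<^sup>2 *\<^sub>R x i)"
  by (simp add: Rq_def)

lemma
  assumes T: "T \<in> Bops" and K: "0 \<le> K" "\<And>x. x \<in> l2H \<Longrightarrow> l2sq (T x) \<le> K * l2sq x"
    and x: "x \<in> l2H"
  shows Rq_l2H: "Rq q T x \<in> l2H"
    and l2sq_Rq_le: "l2sq (Rq q T x) \<le> (2 * K\<^sup>2 + 4 * (2 * qRe q)\<^sup>2 * K + 4 * ((norm q)\<^sup>2)\<^sup>2) * l2sq x"
proof -
  define a where "a = 2 * qRe q"
  define b where "b = (norm q)\<^sup>2"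
  define w where "w = (\<lambda>i. (- a) *\<^sub>R T x i + b *\<^sub>R x i)"
  have Tx: "T x \<in> l2H" and TTx: "T (T x) \<in> l2H"
    using Bops_l2H[OF T] x by blast+
  have w: "w \<in> l2H" "l2sq w \<le> 2 * a\<^sup>2 * l2sq (T x) + 2 * b\<^sup>2 * l2sq x"
    unfolding w_def using l2H_lincomb[OF Tx x, of "- a" b] l2sq_lincomb_le[OF Tx x, of "- a" b] by simp_all
  have Rq_eq: "Rq q T x = (\<lambda>i. 1 *\<^sub>R T (T x) i + 1 *\<^sub>R w i)"
    by (simp add: Rq_apply[OF x] w_def a_def b_def algebra_simps)
  show "Rq q T x \<in> l2H"
    unfolding Rq_eq using TTx w(1) by (rule l2H_lincomb)
  have "l2sq (Rq q T x) \<le> 2 * l2sq (T (T x)) + 2 * l2sq w"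
    unfolding Rq_eq using l2sq_lincomb_le[OF TTx w(1), of 1 1] by simp
  also have "\<dots> \<le> 2 * (K * (K * l2sq x)) + 2 * (2 * a\<^sup>2 * (K * l2sq x) + 2 * b\<^sup>2 * l2sq x)"
  proof -
    have "K * l2sq (T x) \<le> K * (K * l2sq x)" "2 * a\<^sup>2 * l2sq (T x) \<le> 2 * a\<^sup>2 * (K * l2sq x)"
      using K(2)[OF x] \<open>0 \<le> K\<close> by (simp_all add: mult_left_mono)
    then have "l2sq (T (T x)) \<le> K * (K * l2sq x)"
      and "l2sq w \<le> 2 * a\<^sup>2 * (K * l2sq x) + 2 * b\<^sup>2 * l2sq x"
      using K(2)[OF Tx] w(2) by linarith+
    then show ?thesis
      by (intro add_mono) simp_all
  qed
  also have "\<dots> = (2 * K\<^sup>2 + 4 * a\<^sup>2 * K + 4 * b\<^sup>2) * l2sq x"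
    by (simp add: algebra_simps power2_eq_square)
  finally show "l2sq (Rq q T x) \<le> (2 * K\<^sup>2 + 4 * (2 * qRe q)\<^sup>2 * K + 4 * ((norm q)\<^sup>2)\<^sup>2) * l2sq x"
    by (simp add: a_def b_def)
qed

lemma Rq_Bops:
  assumes T: "T \<in> Bops"
  shows "Rq q T \<in> Bops"
proof -
  obtain K where K: "0 \<le> K" "\<And>x. x \<in> l2H \<Longrightarrow> l2sq (T x) \<le> K * l2sq x"
    using Bops_l2sq_bound[OF T] by blast
  show ?thesis
  proof (rule BopsI[where K = "2 * K\<^sup>2 + 4 * (2 * qRe q)\<^sup>2 * K + 4 * ((norm q)\<^sup>2)\<^sup>2"])
    show "x \<in> l2H \<Longrightarrow> Rq q T x \<in> l2H" for x
      by (rule Rq_l2H[OF T K])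
    show "x \<in> l2H \<Longrightarrow> l2sq (Rq q T x) \<le> (2 * K\<^sup>2 + 4 * (2 * qRe q)\<^sup>2 * K + 4 * ((norm q)\<^sup>2)\<^sup>2) * l2sq x" for x
      by (rule l2sq_Rq_le[OF T K])
    show "Rq q T (\<lambda>i. x i + y i) = (\<lambda>i. Rq q T x i + Rq q T y i)" if "x \<in> l2H" "y \<in> l2H" for x y
      using that l2H_add[OF that] Bops_l2H[OF T]
      by (simp add: Rq_apply Bops_add[OF T] algebra_simps scaleR_add_right)
    show "Rq q T (rscal x c) = rscal (Rq q T x) c" if x: "x \<in> l2H" for x c
    proof -
      have "T (rscal x c) = rscal (T x) c" "T (rscal (T x) c) = rscal (T (T x)) c"
        using Bops_rscal[OF T] Bops_l2H[OF T x] x by blast+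
      then show ?thesis
        unfolding Rq_apply[OF l2H_rscal[OF x]] Rq_apply[OF x]
        by (simp add: rscal_def qmult_add_left qmult_diff_left qmult_scaleR_left)
    qed
  qed (use K(1) in \<open>simp_all add: Rq_def\<close>)
qed

lemma opdist_Rq_le:
  assumes T: "T \<in> Bops" and K: "0 \<le> K" "\<And>x. x \<in> l2H \<Longrightarrow> l2sq (T x) \<le> K * l2sq x"
  shows "opdist (Rq p T) (Rq q T) \<le> sqrt (2 * (2 * qRe q - 2 * qRe p)\<^sup>2 * K + 2 * ((norm p)\<^sup>2 - (norm q)\<^sup>2)\<^sup>2)"
  unfolding opdist_def
proof (rule opnorm_le_sqrt)
  define a where "a = 2 * qRe q - 2 * qRe p"
  define b where "b = (norm p)\<^sup>2 - (norm q)\<^sup>2"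
  show "0 \<le> 2 * (2 * qRe q - 2 * qRe p)\<^sup>2 * K + 2 * ((norm p)\<^sup>2 - (norm q)\<^sup>2)\<^sup>2"
    using K(1) by simp
  fix x assume x: "x \<in> l2H"
  have Tx: "T x \<in> l2H"
    using Bops_l2H[OF T x] .
  have "(\<lambda>i. Rq p T x i - Rq q T x i) = (\<lambda>i. a *\<^sub>R T x i + b *\<^sub>R x i)"
    by (simp add: Rq_apply[OF x] a_def b_def fun_eq_iff algebra_simps)
  then have "l2sq (\<lambda>i. Rq p T x i - Rq q T x i) \<le> 2 * a\<^sup>2 * l2sq (T x) + 2 * b\<^sup>2 * l2sq x"
    using l2sq_lincomb_le[OF Tx x] by simp
  also have "\<dots> \<le> 2 * a\<^sup>2 * (K * l2sq x) + 2 * b\<^sup>2 * l2sq x"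
    using K(2)[OF x] by (simp add: mult_left_mono)
  finally show "l2sq (\<lambda>i. Rq p T x i - Rq q T x i)
      \<le> (2 * (2 * qRe q - 2 * qRe p)\<^sup>2 * K + 2 * ((norm p)\<^sup>2 - (norm q)\<^sup>2)\<^sup>2) * l2sq x"
    by (simp add: a_def b_def algebra_simps)
qed

lemma Rq_continuous:
  assumes T: "T \<in> Bops" and "0 < e"
  shows "\<exists>d>0. \<forall>p. dist p q < d \<longrightarrow> opdist (Rq p T) (Rq q T) < e"
proof -
  obtain K where K: "0 \<le> K" "\<And>x. x \<in> l2H \<Longrightarrow> l2sq (T x) \<le> K * l2sq x"
    using Bops_l2sq_bound[OF T] by blast
  define f where "f p = sqrt (2 * (2 * qRe q - 2 * qRe p)\<^sup>2 * K + 2 * ((norm p)\<^sup>2 - (norm q)\<^sup>2)\<^sup>2)" for p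
  have "isCont f q"
    unfolding f_def qRe_def by (intro continuous_intros)
  then obtain d where "0 < d" and d: "\<And>p. dist p q < d \<Longrightarrow> dist (f p) (f q) < e"
    using \<open>0 < e\<close> unfolding continuous_at_eps_delta by blast
  have "opdist (Rq p T) (Rq q T) < e" if "dist p q < d" for p
    using opdist_Rq_le[OF T K, of p q] d[OF that] by (simp add: f_def)
  with \<open>0 < d\<close> show ?thesis
    by blast
qed

lemma frontier_S_spectrum_subset:
  assumes T: "T \<in> Bops"
  shows "frontier (S_spectrum T) \<subseteq> boundary_S_spectrum T"
proof
  fix q assume q: "q \<in> frontier (S_spectrum T)"
  have "(\<exists>S\<in>Bops - Binv. opdist S (Rq q T) < e) \<and> (\<exists>S\<in>Binv. opdist S (Rq q T) < e)"
    if "0 < e" for e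
  proof -
    obtain d where "0 < d" and d: "\<And>p. dist p q < d \<Longrightarrow> opdist (Rq p T) (Rq q T) < e"
      using Rq_continuous[OF T \<open>0 < e\<close>] by blast
    from q \<open>0 < d\<close> obtain p1 where p1: "p1 \<in> S_spectrum T" "dist q p1 < d"
      unfolding frontier_straddle by blast
    from q \<open>0 < d\<close> obtain p2 where p2: "p2 \<notin> S_spectrum T" "dist q p2 < d"
      unfolding frontier_straddle by blast
    have "Rq p1 T \<in> Bops - Binv" "Rq p2 T \<in> Binv"
      using p1(1) p2(1) Rq_Bops[OF T] by (simp_all add: S_spectrum_def)
    moreover have "opdist (Rq p1 T) (Rq q T) < e" "opdist (Rq p2 T) (Rq q T) < e"
      using d p1(2) p2(2) by (simp_all add: dist_commute)
    ultimately show ?thesis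
      by blast
  qed
  then have "Rq q T \<in> Bfrontier (Bops - Binv)"
    unfolding mem_Bfrontier_noninvertible_iff using Rq_Bops[OF T] by blast
  then show "q \<in> boundary_S_spectrum T"
    by (simp add: boundary_S_spectrum_def)
qed

lemma Rshift_eq_weighted_comp_op: "Rshift = weighted_comp_op (\<lambda>i. i + 1) (\<lambda>i. if i = -1 then 0 else 1)"
  by (simp add: Rshift_def weighted_comp_op_def fun_eq_iff)

lemma Rshift_Bops: "Rshift \<in> Bops"
  unfolding Rshift_eq_weighted_comp_op
  by (rule weighted_comp_op_Bops[where M = 1]) (simp_all add: inj_def)

lemma Rq_zero_eq_comp:
  assumes T: "T \<in> Bops"
  shows "Rq 0 T = T \<circ> T"
proof
  fix x
  show "Rq 0 T x = (T \<circ> T) x"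
  proof (cases "x \<in> l2H")
    case True
    then show ?thesis
      by (simp add: Rq_apply qRe_def)
  next
    case False
    then show ?thesis
      by (simp add: Rq_def Bops_outside[OF T] Bops_zero[OF T])
  qed
qed

lemma Rq_zero_Rshift:
  "Rq 0 Rshift = weighted_comp_op (\<lambda>i. i + 2) (\<lambda>i. if i = -1 \<or> i = -2 then 0 else 1)"
proof -
  have "Rq 0 Rshift = Rshift \<circ> Rshift"
    by (rule Rq_zero_eq_comp[OF Rshift_Bops])
  also have "\<dots> = weighted_comp_op ((\<lambda>i. i + 1) \<circ> (\<lambda>i. i + 1))
      (\<lambda>i. (if i = -1 then 0 else 1) * (if i + 1 = -1 then 0 else 1))"
    unfolding Rshift_eq_weighted_comp_op
    by (rule weighted_comp_op_comp[where M = 1]) (simp_all add: inj_def)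
  also have "\<dots> = weighted_comp_op (\<lambda>i. i + 2) (\<lambda>i. if i = -1 \<or> i = -2 then 0 else 1)"
    by (rule arg_cong2[where f = weighted_comp_op]) (auto simp: fun_eq_iff)
  finally show ?thesis .
qed

text \<open>Here \<open>axis 1 1\<close> is the quaternion \<open>1\<close>, so \<open>qgeom q i = q\<^sup>i\<close> for \<open>i \<ge> 0\<close>.\<close>
definition qgeom :: "quat \<Rightarrow> int \<Rightarrow> quat" where
  "qgeom q i = (if 0 \<le> i then (qmult q ^^ nat i) (axis 1 1) else 0)"

lemma qgeom_succ: "0 \<le> i \<Longrightarrow> qgeom q (i + 1) = qmult q (qgeom q i)"
  by (simp add: qgeom_def nat_add_distrib)

lemma qgeom_nonzero: "qgeom q \<noteq> (\<lambda>i. 0)"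
proof
  assume "qgeom q = (\<lambda>i. 0)"
  then have "norm (qgeom q 0) = 0"
    by simp
  then show False
    by (simp add: qgeom_def)
qed

lemma qgeom_l2H:
  assumes "norm q < 1"
  shows "qgeom q \<in> l2H"
proof -
  let ?f = "\<lambda>i. (norm (qgeom q i))\<^sup>2"
  have "summable (\<lambda>n. ((norm q)\<^sup>2) ^ n)"
    using assms by (simp add: summable_geometric abs_square_less_1)
  then have "(\<lambda>n. ((norm q)\<^sup>2) ^ n) summable_on UNIV"
    by (simp add: norm_summable_imp_summable_on)
  moreover have "(\<lambda>n. ((norm q)\<^sup>2) ^ n) = ?f \<circ> int"
    by (simp add: fun_eq_iff qgeom_def norm_qmult_power power_even_eq flip: power_mult)
  ultimately have "?f summable_on range int"
    by (simp add: summable_on_reindex o_def)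
  moreover have "?f summable_on UNIV \<longleftrightarrow> ?f summable_on range int"
    by (rule summable_on_cong_neutral) (auto simp: qgeom_def image_iff not_le dest: nonneg_int_cases)
  ultimately have "?f summable_on UNIV"
    by simp
  then show ?thesis
    by (simp add: l2H_def)
qed

lemma Rq_Rshift_qgeom:
  assumes "norm q < 1"
  shows "Rq q Rshift (qgeom q) = (\<lambda>i. 0)"
proof
  fix i :: int
  let ?x = "qgeom q"
  have x: "?x \<in> l2H"
    using assms by (rule qgeom_l2H)
  have R: "Rshift ?x = (\<lambda>i. if i = -1 then 0 else ?x (i + 1))"
    using x by (simp add: Rshift_def)
  have RR: "Rshift (Rshift ?x) = (\<lambda>i. if i = -1 \<or> i = -2 then 0 else ?x (i + 2))"
    using fun_cong[OF Rq_zero_Rshift, of ?x] x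
    by (simp add: Rq_zero_eq_comp[OF Rshift_Bops] weighted_comp_op_apply fun_eq_iff)
  show "Rq q Rshift ?x i = 0"
  proof (cases "0 \<le> i")
    case True
    have "?x (i + 2) = qmult q (qmult q (?x i))"
      using qgeom_succ[of "i + 1" q] qgeom_succ[OF True] True by (simp add: add.assoc)
    then show ?thesis
      using True qgeom_succ[OF True] qmult_characteristic[of q "?x i"]
      unfolding Rq_apply[OF x] RR unfolding R by simp
  next
    case False
    then show ?thesis
      unfolding Rq_apply[OF x] RR unfolding R by (simp add: qgeom_def)
  qed
qed

lemma ball_subset_S_spectrum_Rshift: "ball 0 1 \<subseteq> S_spectrum Rshift"
proof
  fix q :: quat assume "q \<in> ball 0 1"
  then have "norm q < 1"
    by simp
  then have "Rq q Rshift \<notin> Binv"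
    using not_Binv_if_kernel qgeom_l2H qgeom_nonzero Rq_Rshift_qgeom by blast
  then show "q \<in> S_spectrum Rshift"
    by (simp add: S_spectrum_def)
qed

lemma zero_in_boundary_S_spectrum_Rshift: "0 \<in> boundary_S_spectrum Rshift"
proof -
  define c where "c = (\<lambda>(\<epsilon>::real) (i::int). if i = -1 \<or> i = -2 then \<epsilon> else 1)"
  have Rq0: "Rq 0 Rshift = weighted_comp_op (\<lambda>i. i + 2) (c 0)"
    by (simp add: Rq_zero_Rshift c_def)
  have "0 \<in> S_spectrum Rshift"
    using ball_subset_S_spectrum_Rshift by (simp add: subset_eq)
  then have noninvertible: "Rq 0 Rshift \<in> Bops - Binv"
    using Rq_Bops[OF Rshift_Bops] by (simp add: S_spectrum_def)
  show ?thesis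
    unfolding boundary_S_spectrum_def mem_Collect_eq mem_Bfrontier_noninvertible_iff
  proof (intro conjI allI impI)
    show "Rq 0 Rshift \<in> Bops"
      using noninvertible by simp
    fix e :: real assume "0 < e"
    show "\<exists>S\<in>Bops - Binv. opdist S (Rq 0 Rshift) < e"
      by (rule bexI[OF _ noninvertible]) (simp add: opdist_self \<open>0 < e\<close>)
    define \<epsilon> where "\<epsilon> = min (e / 2) 1"
    have \<epsilon>: "0 < \<epsilon>" "\<epsilon> < e" "\<epsilon> \<le> 1"
      using \<open>0 < e\<close> by (auto simp: \<epsilon>_def)
    have "weighted_comp_op (\<lambda>i. i + 2) (c \<epsilon>) \<in> Binv"
      using \<epsilon> by (intro weighted_comp_op_Binv[where m = \<epsilon> and M = 1]) (auto simp: c_def bij_plus_right)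
    moreover have "opdist (weighted_comp_op (\<lambda>i. i + 2) (c \<epsilon>)) (Rq 0 Rshift) < e"
    proof -
      have "opdist (weighted_comp_op (\<lambda>i. i + 2) (c \<epsilon>)) (Rq 0 Rshift) \<le> \<epsilon>"
        unfolding Rq0 opdist_def weighted_comp_op_diff
        using \<epsilon> by (intro opnorm_weighted_comp_op_le) (auto simp: c_def inj_def)
      with \<open>\<epsilon> < e\<close> show ?thesis
        by linarith
    qed
    ultimately show "\<exists>S\<in>Binv. opdist S (Rq 0 Rshift) < e"
      by blast
  qed
qed

theorem mainTheorem15:
  shows "frontier (S_spectrum Rshift) \<subset> boundary_S_spectrum Rshift"
proof -
  have "ball 0 1 \<subseteq> interior (S_spectrum Rshift)"
    using ball_subset_S_spectrum_Rshift open_ball by (rule interior_maximal)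
  then have "0 \<in> interior (S_spectrum Rshift)"
    by (simp add: subset_eq)
  then have "0 \<notin> frontier (S_spectrum Rshift)"
    by (simp add: frontier_def)
  then show ?thesis
    using frontier_S_spectrum_subset[OF Rshift_Bops] zero_in_boundary_S_spectrum_Rshift by blast
qed

end
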